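(* For every forest $T$ and every integer $k\geq 3$, $\sigma(T)=\tau_1(T^{(k)})$. Equivalently, $\sigma(T)$ is the minimum size of a set $Y$ such that $T^{(k)}$ is isomorphic to a subhypergraph of $\{\{y\}\cup Z': y\in Y,\ Z'\subseteq Z,\ |Z'|=k-1\}$ for some set $Z$ disjoint from $Y$.
   Context: For a graph $H$ and integer $k\geq 2$, the $k$-expansion $H^{(k)}$ is the $k$-uniform hypergraph obtained by replacing each edge $xy$ of $H$ by a $k$-set $E_{xy}$ consisting of $x,y$ and $k-2$ new vertices, where the sets $E_{xy}\setminus\{x,y\}$ are pairwise disjoint for distinct edges and disjoint from $V(H)$. For a forest $T$, $\sigma(T):=\min\{|X|+e(T\setminus X): X\subseteq V(T)\text{ independent in }T\}$, where $T\setminus X$ is obtained by deleting the vertices of $X$ and all incident edges and $e(\cdot)$ counts edges. A set $Y$ is a 1-cross-cut of a family $\mathcal C$ of sets if $|Y\cap E|=1$ for every $E\in\mathcal C$; $\tau_1(\mathcal C)$ is the minimum size of a 1-cross-cut of $\mathcal C$ (and $\infty$ if none exists). *)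

theory Defs
  imports Main "HOL-Library.Extended_Nat"
begin

definition simple_graph :: "'a set \<Rightarrow> 'a set set \<Rightarrow> bool" where
  "simple_graph V E \<longleftrightarrow> finite V \<and> (\<forall>e\<in>E. e \<subseteq> V \<and> card e = 2)"

definition is_cycle :: "'a set set \<Rightarrow> 'a list \<Rightarrow> bool" where
  "is_cycle E vs \<longleftrightarrow> length vs \<ge> 3 \<and> distinct vs \<and>
     (\<forall>i < length vs. {vs ! i, vs ! ((i + 1) mod length vs)} \<in> E)"

definition forest :: "'a set \<Rightarrow> 'a set set \<Rightarrow> bool" where
  "forest V E \<longleftrightarrow> simple_graph V E \<and> \<not> (\<exists>vs. set vs \<subseteq> V \<and> is_cycle E vs)"

definition independent :: "'a set set \<Rightarrow> 'a set \<Rightarrow> bool" where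
  "independent E X \<longleftrightarrow> (\<forall>e\<in>E. \<not> e \<subseteq> X)"

definition edges_del :: "'a set set \<Rightarrow> 'a set \<Rightarrow> nat" where
  "edges_del E X = card {e \<in> E. e \<inter> X = {}}"

definition sigma :: "'a set \<Rightarrow> 'a set set \<Rightarrow> nat" where
  "sigma V E = Min ((\<lambda>X. card X + edges_del E X) ` {X. X \<subseteq> V \<and> independent E X})"

definition expansion_edge :: "nat \<Rightarrow> 'a set \<Rightarrow> ('a + ('a set \<times> nat)) set" where
  "expansion_edge k e = Inl ` e \<union> {Inr (e, i) | i. i < k - 2}"

definition expansion :: "nat \<Rightarrow> 'a set set \<Rightarrow> ('a + ('a set \<times> nat)) set set" where
  "expansion k E = expansion_edge k ` E"

text \<open>1-cross-cut and tau_1 (infinity if none exists).\<close>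
definition one_cross_cut :: "'b set set \<Rightarrow> 'b set \<Rightarrow> bool" where
  "one_cross_cut C Y \<longleftrightarrow> (\<forall>E\<in>C. card (Y \<inter> E) = 1)"

definition tau1 :: "'b set set \<Rightarrow> enat" where
  "tau1 C = (INF Y \<in> {Y. finite Y \<and> one_cross_cut C Y}. enat (card Y))"

end

theory Submission
  imports Defs
begin

(* The identity tau_1(T^(k)) = sigma(T) holds for every finite simple graph when k >= 3.  Write f(X) = |X| + e(T - X) for independent X.

   Upper bound: from an independent X build the canonical cross-cut consisting of the
   vertices of X together with one new vertex (e,0) of every edge e avoiding X.  An edge
   meeting X meets it in exactly one vertex (independence), and an edge avoiding X
   meets the cut exactly in (e,0), which exists because k - 2 > 0.  Its size is f(X).

   Lower bound: for any 1-cross-cut Y, the original vertices X in Y form an independent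
   set (an edge inside X would meet Y twice), and every edge avoiding X must meet Y in a
   new vertex, which belongs to that edge alone.  Splitting Y into original and new
   vertices therefore gives |Y| >= f(X) >= sigma. *)

lemma card_sum_type_split:
  fixes Y :: "('a + 'b) set"
  assumes "finite Y"
  shows "card Y = card (Inl -` Y) + card (Inr -` Y)"
proof -
  have fin: "finite (Inl -` Y)" "finite (Inr -` Y)"
    using assms by (auto intro: finite_vimageI)
  have "Y = Inl ` (Inl -` Y) \<union> Inr ` (Inr -` Y)"
  proof (intro equalityI subsetI)
    fix y assume "y \<in> Y"
    then show "y \<in> Inl ` (Inl -` Y) \<union> Inr ` (Inr -` Y)" by (cases y) auto
  qed auto
  then have "card Y = card (Inl ` (Inl -` Y) \<union> Inr ` (Inr -` Y))" by simp
  also have "\<dots> = card (Inl ` (Inl -` Y) :: ('a + 'b) set) + card (Inr ` (Inr -` Y) :: ('a + 'b) set)"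
    using fin assms by (intro card_Un_disjoint) auto
  also have "\<dots> = card (Inl -` Y) + card (Inr -` Y)"
    by (simp only: card_image inj_Inl inj_Inr inj_on_subset subset_UNIV)
  finally show ?thesis .
qed

lemma card_edge_inter_single:
  assumes "card e = 2" and "e \<inter> X \<noteq> {}" and "\<not> e \<subseteq> X"
  shows "card (X \<inter> e) = 1"
proof -
  have fin: "finite e" using assms(1) by (metis card.infinite zero_neq_numeral)
  have "card (X \<inter> e) \<le> 2" using assms(1) fin by (metis card_mono inf_le2)
  moreover have "card (X \<inter> e) \<noteq> 0" using assms(2) fin by auto
  moreover have "card (X \<inter> e) \<noteq> 2"
    using assms fin card_subset_eq[of e "X \<inter> e"] by auto
  ultimately show ?thesis by linarith
qed

lemma simple_graph_finite_edges:
  assumes "simple_graph V E"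
  shows "finite E"
  using assms unfolding simple_graph_def
  by (meson Pow_iff finite_Pow_iff rev_finite_subset subsetI)

lemma sigma_le:
  assumes "simple_graph V E" and "X \<subseteq> V" and "independent E X"
  shows "sigma V E \<le> card X + edges_del E X"
proof -
  have "finite {X. X \<subseteq> V \<and> independent E X}"
    using assms(1) unfolding simple_graph_def by simp
  then show ?thesis
    unfolding sigma_def using assms(2,3) by (intro Min_le) auto
qed

lemma sigma_attained:
  assumes "simple_graph V E"
  obtains X where "X \<subseteq> V" "independent E X" "card X + edges_del E X = sigma V E"
proof -
  let ?D = "{X. X \<subseteq> V \<and> independent E X}"
  have "finite ?D" using assms unfolding simple_graph_def by simp
  moreover have "{} \<in> ?D"
    using assms unfolding simple_graph_def independent_def by fastforce
  ultimately have "sigma V E \<in> (\<lambda>X. card X + edges_del E X) ` ?D"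
    unfolding sigma_def by (intro Min_in) auto
  then show ?thesis using that by auto
qed

definition canonical_cut :: "'a set set \<Rightarrow> 'a set \<Rightarrow> ('a + ('a set \<times> nat)) set" where
  "canonical_cut E X = Inl ` X \<union> (\<lambda>e. Inr (e, 0)) ` {e \<in> E. e \<inter> X = {}}"

lemma card_canonical_cut:
  assumes "finite X" and "finite E"
  shows "card (canonical_cut E X) = card X + edges_del E X"
proof -
  have "card (canonical_cut E X) =
        card (Inl ` X :: ('a + ('a set \<times> nat)) set)
      + card ((\<lambda>e. Inr (e, 0)) ` {e \<in> E. e \<inter> X = {}} :: ('a + ('a set \<times> nat)) set)"
    unfolding canonical_cut_def using assms by (intro card_Un_disjoint) auto
  then show ?thesis
    unfolding edges_del_def by (simp add: card_image inj_on_def)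
qed

lemma canonical_cut_is_cross_cut:
  assumes "simple_graph V E" and "independent E X" and "k \<ge> 3"
  shows "one_cross_cut (expansion k E) (canonical_cut E X)"
  unfolding one_cross_cut_def expansion_def
proof
  fix C assume "C \<in> expansion_edge k ` E"
  then obtain e where e: "e \<in> E" "C = expansion_edge k e" by auto
  show "card (canonical_cut E X \<inter> C) = 1"
  proof (cases "e \<inter> X = {}")
    case True
    then have "canonical_cut E X \<inter> C = {Inr (e, 0)}"
      using e assms(3) unfolding canonical_cut_def expansion_edge_def by auto
    then show ?thesis by simp
  next
    case False
    have "canonical_cut E X \<inter> C = Inl ` (X \<inter> e)"
      using False e unfolding canonical_cut_def expansion_edge_def by auto
    moreover have "card (X \<inter> e) = 1"
      using assms(1,2) e(1) False
      by (intro card_edge_inter_single) (auto simp: simple_graph_def independent_def)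
    ultimately show ?thesis by (simp add: card_image)
  qed
qed

lemma tau1_le_sigma:
  assumes "simple_graph V E" and "k \<ge> 3"
  shows "tau1 (expansion k E) \<le> enat (sigma V E)"
proof -
  obtain X where X: "X \<subseteq> V" "independent E X" "card X + edges_del E X = sigma V E"
    using sigma_attained[OF assms(1)] .
  have finX: "finite X" using X(1) assms(1) unfolding simple_graph_def by (auto intro: finite_subset)
  have finE: "finite E" using simple_graph_finite_edges[OF assms(1)] .
  have "finite (canonical_cut E X)"
    using finX finE unfolding canonical_cut_def by simp
  moreover have "card (canonical_cut E X) = sigma V E"
    using card_canonical_cut[OF finX finE] X(3) by simp
  moreover have "one_cross_cut (expansion k E) (canonical_cut E X)"
    using canonical_cut_is_cross_cut[OF assms(1) X(2) assms(2)] .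
  ultimately show ?thesis
    unfolding tau1_def by (metis (mono_tags, lifting) INF_lower mem_Collect_eq)
qed

lemma cross_cut_trace_independent:
  assumes "simple_graph V E" and "finite Y" and "one_cross_cut (expansion k E) Y"
  shows "independent E (Inl -` Y)"
  unfolding independent_def
proof (intro ballI notI)
  fix e assume e: "e \<in> E" "e \<subseteq> Inl -` Y"
  obtain a b where ab: "e = {a, b}" "a \<noteq> b"
    using assms(1) e(1) card_2_iff unfolding simple_graph_def by metis
  have "{Inl a, Inl b} \<subseteq> Y \<inter> expansion_edge k e"
    using e ab unfolding expansion_edge_def by auto
  then have "card {Inl a, Inl b :: 'a + ('a set \<times> nat)} \<le> card (Y \<inter> expansion_edge k e)"
    using assms(2) by (intro card_mono) auto
  moreover have "card (Y \<inter> expansion_edge k e) = 1"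
    using assms(3) e(1) unfolding one_cross_cut_def expansion_def by auto
  ultimately show False using ab(2) by simp
qed

lemma cross_cut_hits_avoiding_edges:
  assumes "one_cross_cut (expansion k E) Y"
  shows "{e \<in> E. e \<inter> Inl -` Y = {}} \<subseteq> fst ` (Inr -` Y)"
proof
  fix e assume "e \<in> {e \<in> E. e \<inter> Inl -` Y = {}}"
  then have e: "e \<in> E" "e \<inter> Inl -` Y = {}" by auto
  have "card (Y \<inter> expansion_edge k e) = 1"
    using assms e(1) unfolding one_cross_cut_def expansion_def by auto
  then have "Y \<inter> expansion_edge k e \<noteq> {}" by force
  then obtain y where y: "y \<in> Y" "y \<in> expansion_edge k e" by blast
  then obtain i where "y = Inr (e, i)"
    using e(2) unfolding expansion_edge_def by auto
  then show "e \<in> fst ` (Inr -` Y)" using y(1) by force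
qed

lemma sigma_le_cross_cut:
  assumes "simple_graph V E" and "finite Y" and "one_cross_cut (expansion k E) Y"
  shows "sigma V E \<le> card Y"
proof -
  define X where "X = V \<inter> Inl -` Y"
  have fin: "finite (Inl -` Y)" "finite (Inr -` Y)"
    using assms(2) by (auto intro: finite_vimageI)
  have "independent E X"
    using cross_cut_trace_independent[OF assms] unfolding X_def independent_def by blast
  then have "sigma V E \<le> card X + edges_del E X"
    using sigma_le[OF assms(1)] X_def by blast
  moreover have "card X \<le> card (Inl -` Y)"
    using fin(1) unfolding X_def by (intro card_mono) auto
  moreover have "{e \<in> E. e \<inter> X = {}} = {e \<in> E. e \<inter> Inl -` Y = {}}"
    using assms(1) unfolding X_def simple_graph_def by blast
  then have "edges_del E X \<le> card (Inr -` Y)"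
    unfolding edges_del_def using cross_cut_hits_avoiding_edges[OF assms(3)] fin(2)
    by (metis (no_types, lifting) card_image_le card_mono finite_imageI order_trans)
  ultimately show ?thesis
    using card_sum_type_split[OF assms(2)] by linarith
qed

theorem tau1_expansion_eq_sigma:
  assumes "simple_graph V E" and "k \<ge> 3"
  shows "tau1 (expansion k E) = enat (sigma V E)"
proof (rule antisym)
  show "tau1 (expansion k E) \<le> enat (sigma V E)"
    using tau1_le_sigma[OF assms] .
  show "enat (sigma V E) \<le> tau1 (expansion k E)"
    unfolding tau1_def using sigma_le_cross_cut[OF assms(1)] by (auto intro: INF_greatest)
qed

theorem mainTheorem5:
  fixes V :: "'a set" and E :: "'a set set" and k :: nat
  assumes "forest V E" and "k \<ge> 3"
  shows "tau1 (expansion k E) = enat (sigma V E)"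
  using tau1_expansion_eq_sigma assms unfolding forest_def by blast

end
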